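(* Let $(F,+,\cdot)$ be a Field with Unity $1$ and additive identity $0$, and let $(\mathbb S,+_{\mathbb S},\cdot_{\mathbb S})$ be the structure on $\mathbb S=F\times F$ described in the context. Then $(\mathbb S,+_{\mathbb S},\cdot_{\mathbb S})$ is an S-Field with $(\mathbb S_0,+_{\mathbb S},\cdot_{\mathbb S})\cong(F,+,\cdot)$; that is, $(\mathbb S,+_{\mathbb S},\cdot_{\mathbb S})$ is a Proper S-Field Extension of $(F,+,\cdot)$.
   Context: Construction: $\mathbb S=F\times F=\{(x,y):x,y\in F\}$, with $\mathbf 0=(0,0)$ and distinguished element $\mathbf 1=(1,0)$, and operations $(x,y)+_{\mathbb S}(u,v)=(x+u,\,y+v)$ and $(x,y)\cdot_{\mathbb S}(u,v)=(x\cdot u+y+v-x\cdot v-y\cdot u,\;y\cdot v+x\cdot v+y\cdot u)$. General definitions (written for a structure $(\mathbb S,+,\cdot)$ with zero $0$ and distinguished element $1$): An S-Structure is a triple $(\mathbb S,+,\cdot)$ where $+,\cdot$ are binary operations on the set $\mathbb S$ such that $(\mathbb S,+)$ is a commutative group with identity $0$ (inverse $-s$, $s-t:=s+(-t)$), $\mathbb S$ is closed under $\cdot$, and there is $s\in\mathbb S$ with $0\cdot s\neq0$ or $s\cdot0\neq0$. Commutative: $s\cdot t=t\cdot s$ for all $s,t$. For $\alpha\in\mathbb S$: $\mathbb S_\alpha=\{s:0\cdot s=s\cdot0=\alpha\}$, $\Lambda=\{\alpha:\mathbb S_\alpha\neq\emptyset\}$. Wheel Distributive: $s\cdot(t+r)+(s\cdot0)=(s\cdot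 t)+(s\cdot r)$ for all $s,t,r$. S-Associative: for all $m,n\in\mathbb S_0$, $s\in\mathbb S$, $m\cdot(n\cdot s)=(m\cdot n)\cdot s-([(m-1)\cdot(n-1)]\cdot(0\cdot s))$. Base: if $\mathbb S_0\neq\emptyset$, $\alpha\in\Lambda$, then $q\in\mathbb S_\alpha$ is a Base for $\mathbb S_\alpha$ if $q+\beta\in\mathbb S_\alpha$ for all $\beta\in\mathbb S_0$ and each $s\in\mathbb S_\alpha$ is $q+\beta$ for some $\beta\in\mathbb S_0$; Coordinated: $\mathbb S_0\neq\emptyset$ and each $\mathbb S_\alpha$, $\alpha\in\Lambda$, has a Base. Standard Bases (for a Coordinated Commutative S-Structure): there is a specified $q_0(1)\in\mathbb S_1$ which is a Base for $\mathbb S_1$, and for each $\alpha\in\Lambda$, $q_0(\alpha):=\alpha\cdot(q_0(1)+1)-1$ lies in $\mathbb S_\alpha$ and is a Base for $\mathbb S_\alpha$. Essential S-Structure: Commutative, Wheel Distributive, S-Associative, has Standard Bases, $0,1\in\mathbb S_0$, and $\mathbb S_0=\{1\cdot x:x\in\mathbb S_0\}$. Unity: $e\in\Lambda$ with $e\cdot s=s\cdot e=s$ for all $s$. Scalar Inverses: there is a Unity $e$ and every nonzero $x\in\mathbb S_0$ has $x^{-1}\in\mathbb S_0$ with $x\cdot x^{-1}=x^{-1}\cdot x=e$. S-Ring: Essential S-Structure with a Unity. S-Field: S-Ring with Scalar Inverses. S-Extension: $(\mathbb S,+,\cdot)$ is an S-Extension of $(F,+_F,\cdot_F)$ if $F$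 is closed under $+_F$ and $\cdot_F$, $(\mathbb S,+,\cdot)$ is an S-Structure, and there is $F_{\mathbb S}\subset\mathbb S$ and an isomorphism $\phi:(F,+_F,\cdot_F)\to(F_{\mathbb S},+,\cdot)$. It is a Proper S-Extension if moreover $(\mathbb S_0,+,\cdot)\cong(F,+_F,\cdot_F)$. A Proper S-Field Extension is an S-Field that is a Proper S-Extension. *)

theory Defs
  imports Main
begin

definition is_comm_group :: "'b set \<Rightarrow> ('b \<Rightarrow> 'b \<Rightarrow> 'b) \<Rightarrow> 'b \<Rightarrow> bool" where
  "is_comm_group S add z \<longleftrightarrow>
     z \<in> S \<and>
     (\<forall>s\<in>S. \<forall>t\<in>S. add s t \<in> S) \<and>
     (\<forall>s\<in>S. \<forall>t\<in>S. \<forall>r\<in>S. add (add s t) r = add s (add t r)) \<and>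
     (\<forall>s\<in>S. \<forall>t\<in>S. add s t = add t s) \<and>
     (\<forall>s\<in>S. add z s = s \<and> add s z = s) \<and>
     (\<forall>s\<in>S. \<exists>t\<in>S. add s t = z \<and> add t s = z)"

definition sneg :: "'b set \<Rightarrow> ('b \<Rightarrow> 'b \<Rightarrow> 'b) \<Rightarrow> 'b \<Rightarrow> 'b \<Rightarrow> 'b" where
  "sneg S add z s = (THE t. t \<in> S \<and> add s t = z)"

definition ssub :: "'b set \<Rightarrow> ('b \<Rightarrow> 'b \<Rightarrow> 'b) \<Rightarrow> 'b \<Rightarrow> 'b \<Rightarrow> 'b \<Rightarrow> 'b" where
  "ssub S add z s t = add s (sneg S add z t)"

definition S_structure :: "'b set \<Rightarrow> ('b \<Rightarrow> 'b \<Rightarrow> 'b) \<Rightarrow> ('b \<Rightarrow> 'b \<Rightarrow> 'b) \<Rightarrow> 'b \<Rightarrow> bool" where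
  "S_structure S add mul z \<longleftrightarrow>
     is_comm_group S add z \<and>
     (\<forall>s\<in>S. \<forall>t\<in>S. mul s t \<in> S) \<and>
     (\<exists>s\<in>S. mul z s \<noteq> z \<or> mul s z \<noteq> z)"

definition S_commutative :: "'b set \<Rightarrow> ('b \<Rightarrow> 'b \<Rightarrow> 'b) \<Rightarrow> bool" where
  "S_commutative S mul \<longleftrightarrow> (\<forall>s\<in>S. \<forall>t\<in>S. mul s t = mul t s)"

definition S_alpha :: "'b set \<Rightarrow> ('b \<Rightarrow> 'b \<Rightarrow> 'b) \<Rightarrow> 'b \<Rightarrow> 'b \<Rightarrow> 'b set" where
  "S_alpha S mul z \<alpha> = {s \<in> S. mul z s = \<alpha> \<and> mul s z = \<alpha>}"

definition S_Lambda :: "'b set \<Rightarrow> ('b \<Rightarrow> 'b \<Rightarrow> 'b) \<Rightarrow> 'b \<Rightarrow> 'b set" where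
  "S_Lambda S mul z = {\<alpha> \<in> S. S_alpha S mul z \<alpha> \<noteq> {}}"

definition wheel_distributive :: "'b set \<Rightarrow> ('b \<Rightarrow> 'b \<Rightarrow> 'b) \<Rightarrow> ('b \<Rightarrow> 'b \<Rightarrow> 'b) \<Rightarrow> 'b \<Rightarrow> bool" where
  "wheel_distributive S add mul z \<longleftrightarrow>
     (\<forall>s\<in>S. \<forall>t\<in>S. \<forall>r\<in>S. add (mul s (add t r)) (mul s z) = add (mul s t) (mul s r))"

definition S_associative :: "'b set \<Rightarrow> ('b \<Rightarrow> 'b \<Rightarrow> 'b) \<Rightarrow> ('b \<Rightarrow> 'b \<Rightarrow> 'b) \<Rightarrow> 'b \<Rightarrow> 'b \<Rightarrow> bool" where
  "S_associative S add mul z one \<longleftrightarrow>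
     (\<forall>m\<in>S_alpha S mul z z. \<forall>n\<in>S_alpha S mul z z. \<forall>s\<in>S.
        mul m (mul n s) =
        ssub S add z (mul (mul m n) s)
          (mul (mul (ssub S add z m one) (ssub S add z n one)) (mul z s)))"

definition is_base :: "'b set \<Rightarrow> ('b \<Rightarrow> 'b \<Rightarrow> 'b) \<Rightarrow> ('b \<Rightarrow> 'b \<Rightarrow> 'b) \<Rightarrow> 'b \<Rightarrow> 'b \<Rightarrow> 'b \<Rightarrow> bool" where
  "is_base S add mul z \<alpha> q \<longleftrightarrow>
     S_alpha S mul z z \<noteq> {} \<and> \<alpha> \<in> S_Lambda S mul z \<and>
     q \<in> S_alpha S mul z \<alpha> \<and>
     (\<forall>\<beta>\<in>S_alpha S mul z z. add q \<beta> \<in> S_alpha S mul z \<alpha>) \<and>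
     (\<forall>s\<in>S_alpha S mul z \<alpha>. \<exists>\<beta>\<in>S_alpha S mul z z. s = add q \<beta>)"

definition coordinated :: "'b set \<Rightarrow> ('b \<Rightarrow> 'b \<Rightarrow> 'b) \<Rightarrow> ('b \<Rightarrow> 'b \<Rightarrow> 'b) \<Rightarrow> 'b \<Rightarrow> bool" where
  "coordinated S add mul z \<longleftrightarrow>
     S_alpha S mul z z \<noteq> {} \<and> (\<forall>\<alpha>\<in>S_Lambda S mul z. \<exists>q. is_base S add mul z \<alpha> q)"

definition standard_bases :: "'b set \<Rightarrow> ('b \<Rightarrow> 'b \<Rightarrow> 'b) \<Rightarrow> ('b \<Rightarrow> 'b \<Rightarrow> 'b) \<Rightarrow> 'b \<Rightarrow> 'b \<Rightarrow> bool" where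
  "standard_bases S add mul z one \<longleftrightarrow>
     coordinated S add mul z \<and> S_commutative S mul \<and>
     (\<exists>q1. q1 \<in> S_alpha S mul z one \<and> is_base S add mul z one q1 \<and>
        (\<forall>\<alpha>\<in>S_Lambda S mul z.
           ssub S add z (mul \<alpha> (add q1 one)) one \<in> S_alpha S mul z \<alpha> \<and>
           is_base S add mul z \<alpha> (ssub S add z (mul \<alpha> (add q1 one)) one)))"

definition essential_S_structure :: "'b set \<Rightarrow> ('b \<Rightarrow> 'b \<Rightarrow> 'b) \<Rightarrow> ('b \<Rightarrow> 'b \<Rightarrow> 'b) \<Rightarrow> 'b \<Rightarrow> 'b \<Rightarrow> bool" where
  "essential_S_structure S add mul z one \<longleftrightarrow>
     S_structure S add mul z \<and> one \<in> S \<and>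
     S_commutative S mul \<and> wheel_distributive S add mul z \<and>
     S_associative S add mul z one \<and> standard_bases S add mul z one \<and>
     z \<in> S_alpha S mul z z \<and> one \<in> S_alpha S mul z z \<and>
     S_alpha S mul z z = {mul one x | x. x \<in> S_alpha S mul z z}"

definition is_unity :: "'b set \<Rightarrow> ('b \<Rightarrow> 'b \<Rightarrow> 'b) \<Rightarrow> 'b \<Rightarrow> 'b \<Rightarrow> bool" where
  "is_unity S mul z e \<longleftrightarrow> e \<in> S_Lambda S mul z \<and> (\<forall>s\<in>S. mul e s = s \<and> mul s e = s)"

definition scalar_inverses :: "'b set \<Rightarrow> ('b \<Rightarrow> 'b \<Rightarrow> 'b) \<Rightarrow> 'b \<Rightarrow> bool" where
  "scalar_inverses S mul z \<longleftrightarrow>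
     (\<exists>e. is_unity S mul z e \<and>
        (\<forall>x\<in>S_alpha S mul z z. x \<noteq> z \<longrightarrow>
           (\<exists>y\<in>S_alpha S mul z z. mul x y = e \<and> mul y x = e)))"

definition S_ring :: "'b set \<Rightarrow> ('b \<Rightarrow> 'b \<Rightarrow> 'b) \<Rightarrow> ('b \<Rightarrow> 'b \<Rightarrow> 'b) \<Rightarrow> 'b \<Rightarrow> 'b \<Rightarrow> bool" where
  "S_ring S add mul z one \<longleftrightarrow> essential_S_structure S add mul z one \<and> (\<exists>e. is_unity S mul z e)"

definition S_field :: "'b set \<Rightarrow> ('b \<Rightarrow> 'b \<Rightarrow> 'b) \<Rightarrow> ('b \<Rightarrow> 'b \<Rightarrow> 'b) \<Rightarrow> 'b \<Rightarrow> 'b \<Rightarrow> bool" where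
  "S_field S add mul z one \<longleftrightarrow> S_ring S add mul z one \<and> scalar_inverses S mul z"

definition iso2 :: "('a \<Rightarrow> 'b) \<Rightarrow> 'a set \<Rightarrow> ('a \<Rightarrow> 'a \<Rightarrow> 'a) \<Rightarrow> ('a \<Rightarrow> 'a \<Rightarrow> 'a)
                     \<Rightarrow> 'b set \<Rightarrow> ('b \<Rightarrow> 'b \<Rightarrow> 'b) \<Rightarrow> ('b \<Rightarrow> 'b \<Rightarrow> 'b) \<Rightarrow> bool" where
  "iso2 \<phi> A addA mulA B addB mulB \<longleftrightarrow>
     bij_betw \<phi> A B \<and>
     (\<forall>x\<in>A. \<forall>y\<in>A. \<phi> (addA x y) = addB (\<phi> x) (\<phi> y) \<and> \<phi> (mulA x y) = mulB (\<phi> x) (\<phi> y))"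

definition S_extension :: "'b set \<Rightarrow> ('b \<Rightarrow> 'b \<Rightarrow> 'b) \<Rightarrow> ('b \<Rightarrow> 'b \<Rightarrow> 'b) \<Rightarrow> 'b \<Rightarrow>
                           'a set \<Rightarrow> ('a \<Rightarrow> 'a \<Rightarrow> 'a) \<Rightarrow> ('a \<Rightarrow> 'a \<Rightarrow> 'a) \<Rightarrow> bool" where
  "S_extension S add mul z F addF mulF \<longleftrightarrow>
     (\<forall>x\<in>F. \<forall>y\<in>F. addF x y \<in> F \<and> mulF x y \<in> F) \<and>
     S_structure S add mul z \<and>
     (\<exists>FS \<phi>. FS \<subseteq> S \<and> iso2 \<phi> F addF mulF FS add mul)"

definition proper_S_extension :: "'b set \<Rightarrow> ('b \<Rightarrow> 'b \<Rightarrow> 'b) \<Rightarrow> ('b \<Rightarrow> 'b \<Rightarrow> 'b) \<Rightarrow> 'b \<Rightarrow>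
                           'a set \<Rightarrow> ('a \<Rightarrow> 'a \<Rightarrow> 'a) \<Rightarrow> ('a \<Rightarrow> 'a \<Rightarrow> 'a) \<Rightarrow> bool" where
  "proper_S_extension S add mul z F addF mulF \<longleftrightarrow>
     S_extension S add mul z F addF mulF \<and>
     (\<exists>\<psi>. iso2 \<psi> F addF mulF (S_alpha S mul z z) add mul)"

definition proper_S_field_extension :: "'b set \<Rightarrow> ('b \<Rightarrow> 'b \<Rightarrow> 'b) \<Rightarrow> ('b \<Rightarrow> 'b \<Rightarrow> 'b) \<Rightarrow> 'b \<Rightarrow> 'b \<Rightarrow>
                           'a set \<Rightarrow> ('a \<Rightarrow> 'a \<Rightarrow> 'a) \<Rightarrow> ('a \<Rightarrow> 'a \<Rightarrow> 'a) \<Rightarrow> bool" where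
  "proper_S_field_extension S add mul z one F addF mulF \<longleftrightarrow>
     S_field S add mul z one \<and> proper_S_extension S add mul z F addF mulF"

definition pplus :: "'a::field \<times> 'a \<Rightarrow> 'a \<times> 'a \<Rightarrow> 'a \<times> 'a" where
  "pplus p q = (case p of (x, y) \<Rightarrow> case q of (u, v) \<Rightarrow> (x + u, y + v))"

definition ptimes :: "'a::field \<times> 'a \<Rightarrow> 'a \<times> 'a \<Rightarrow> 'a \<times> 'a" where
  "ptimes p q = (case p of (x, y) \<Rightarrow> case q of (u, v) \<Rightarrow>
      (x * u + y + v - x * v - y * u, y * v + x * v + y * u))"

end

theory Submission
  imports Defs
begin

text \<open>In \<open>F \<times> F\<close> the product \<open>0\<cdot>s\<close> is \<open>(snd s, 0)\<close>. Hence
  \<open>\<bbbS>\<^sub>\<alpha>\<close> is nonempty exactly for \<open>\<alpha> = (a, 0)\<close>, and then \<open>\<bbbS>\<^sub>\<alpha> = {(x, a) | x \<in> F}\<close> is the translate of \<open>\<bbbS>\<^sub>0 = F \<times> {0}\<close> by the base \<open>(0, a)\<close>.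
  On \<open>\<bbbS>\<^sub>0\<close> both operations are those of \<open>F\<close>, which gives the scalar inverses and the
  isomorphism \<open>x \<mapsto> (x, 0)\<close>; the remaining axioms are polynomial identities in \<open>F\<close>.\<close>

lemma pplus_Pair [simp]: "pplus (x, y) (u, v) = (x + u, y + v)"
  by (simp add: pplus_def)

lemma ptimes_Pair [simp]:
  "ptimes (x, y) (u, v) = (x * u + y + v - x * v - y * u, y * v + x * v + y * u)"
  by (simp add: ptimes_def)

lemma sneg_unique:
  assumes "is_comm_group S add z" "s \<in> S" "t \<in> S" "add s t = z"
  shows "sneg S add z s = t"
  unfolding sneg_def
proof (rule the_equality)
  show "t \<in> S \<and> add s t = z" using assms(3,4) by blast
  fix t' assume t': "t' \<in> S \<and> add s t' = z"
  have "t' = add (add t s) t'"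
    using assms t' unfolding is_comm_group_def by metis
  also have "\<dots> = t"
    using assms t' unfolding is_comm_group_def by metis
  finally show "t' = t" .
qed

lemma is_comm_group_pair: "is_comm_group (UNIV :: ('a::field \<times> 'a) set) pplus (0, 0)"
  unfolding is_comm_group_def
proof (intro conjI ballI)
  fix s t r :: "'a \<times> 'a"
  show "\<exists>t'\<in>UNIV. pplus s t' = (0, 0) \<and> pplus t' s = (0, 0)"
    by (intro bexI[of _ "(- fst s, - snd s)"]) (cases s; simp)+
  show "pplus (pplus s t) r = pplus s (pplus t r)"
    by (cases s; cases t; cases r) (simp add: add.assoc)
  show "pplus s t = pplus t s"
    by (cases s; cases t) (simp add: add.commute)
qed (simp_all add: case_prod_unfold pplus_def)

lemma ssub_pair:
  "ssub (UNIV :: ('a::field \<times> 'a) set) pplus (0, 0) s t = (fst s - fst t, snd s - snd t)"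
proof -
  have "sneg UNIV pplus (0, 0) t = (- fst t, - snd t)"
    by (cases t) (simp add: sneg_unique[OF is_comm_group_pair])
  then show ?thesis
    by (cases s) (simp add: ssub_def)
qed

lemma S_alpha_pair_iff:
  "(s :: 'a::field \<times> 'a) \<in> S_alpha UNIV ptimes (0, 0) \<alpha> \<longleftrightarrow> snd \<alpha> = 0 \<and> snd s = fst \<alpha>"
  by (cases s; cases \<alpha>) (auto simp: S_alpha_def)

lemma S_alpha_zero_pair:
  "S_alpha (UNIV :: ('a::field \<times> 'a) set) ptimes (0, 0) (0, 0) = range (\<lambda>x. (x, 0))"
  by (auto simp: S_alpha_pair_iff image_iff intro: prod_eqI)

lemma S_Lambda_pair:
  "S_Lambda (UNIV :: ('a::field \<times> 'a) set) ptimes (0, 0) = {\<alpha>. snd \<alpha> = 0}"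
proof -
  have "S_alpha UNIV ptimes (0, 0) \<alpha> \<noteq> {} \<longleftrightarrow> snd \<alpha> = 0" for \<alpha> :: "'a \<times> 'a"
  proof
    show "snd \<alpha> = 0 \<Longrightarrow> S_alpha UNIV ptimes (0, 0) \<alpha> \<noteq> {}"
      using S_alpha_pair_iff[of "(0, fst \<alpha>)" \<alpha>] by auto
  qed (auto simp: S_alpha_pair_iff)
  then show ?thesis
    unfolding S_Lambda_def by blast
qed

lemma S_structure_pair: "S_structure (UNIV :: ('a::field \<times> 'a) set) pplus ptimes (0, 0)"
proof -
  have "ptimes (0, 0) (0 :: 'a, 1 :: 'a) \<noteq> (0, 0)" by simp
  then show ?thesis
    unfolding S_structure_def using is_comm_group_pair by blast
qed

lemma S_commutative_pair: "S_commutative (UNIV :: ('a::field \<times> 'a) set) ptimes"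
  unfolding S_commutative_def by (auto simp: algebra_simps)

lemma wheel_distributive_pair:
  "wheel_distributive (UNIV :: ('a::field \<times> 'a) set) pplus ptimes (0, 0)"
  unfolding wheel_distributive_def by (auto simp: algebra_simps)

lemma S_associative_pair:
  "S_associative (UNIV :: ('a::field \<times> 'a) set) pplus ptimes (0, 0) (1, 0)"
  unfolding S_associative_def S_alpha_zero_pair
  by (auto simp: ssub_pair algebra_simps)

lemma is_base_pair:
  assumes "snd \<alpha> = 0"
  shows "is_base (UNIV :: ('a::field \<times> 'a) set) pplus ptimes (0, 0) \<alpha> (0, fst \<alpha>)"
  unfolding is_base_def
proof (intro conjI ballI)
  fix s :: "'a \<times> 'a" assume "s \<in> S_alpha UNIV ptimes (0, 0) \<alpha>"
  then show "\<exists>\<beta>\<in>S_alpha UNIV ptimes (0, 0) (0, 0). s = pplus (0, fst \<alpha>) \<beta>"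
    by (cases s) (auto simp: S_alpha_pair_iff intro!: bexI[of _ "(fst s, 0)"])
qed (use assms in \<open>auto simp: S_alpha_pair_iff S_Lambda_pair\<close>)

lemma coordinated_pair: "coordinated (UNIV :: ('a::field \<times> 'a) set) pplus ptimes (0, 0)"
  unfolding coordinated_def S_Lambda_pair S_alpha_zero_pair
  using is_base_pair by blast

lemma standard_base_pair:
  "ssub (UNIV :: ('a::field \<times> 'a) set) pplus (0, 0) (ptimes (a, 0) (pplus (0, 1) (1, 0))) (1, 0)
     = (0, a)"
  by (simp add: ssub_pair)

lemma standard_bases_pair:
  "standard_bases (UNIV :: ('a::field \<times> 'a) set) pplus ptimes (0, 0) (1, 0)"
  unfolding standard_bases_def
proof (intro conjI coordinated_pair S_commutative_pair exI[of _ "(0, 1)"] ballI)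
  show "(0, 1) \<in> S_alpha UNIV ptimes (0, 0) (1 :: 'a, 0 :: 'a)"
    by (simp add: S_alpha_pair_iff)
  show "is_base UNIV pplus ptimes (0, 0) (1, 0) (0 :: 'a, 1 :: 'a)"
    using is_base_pair[of "(1, 0)"] by simp
  fix \<alpha> :: "'a \<times> 'a" assume "\<alpha> \<in> S_Lambda UNIV ptimes (0, 0)"
  then obtain a where \<alpha>: "\<alpha> = (a, 0)"
    by (cases \<alpha>) (auto simp: S_Lambda_pair)
  show "ssub UNIV pplus (0, 0) (ptimes \<alpha> (pplus (0, 1) (1, 0))) (1, 0) \<in> S_alpha UNIV ptimes (0, 0) \<alpha>"
    unfolding \<alpha> standard_base_pair by (simp add: S_alpha_pair_iff)
  show "is_base UNIV pplus ptimes (0, 0) \<alpha> (ssub UNIV pplus (0, 0) (ptimes \<alpha> (pplus (0, 1) (1, 0))) (1, 0))"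
    using is_base_pair[of \<alpha>] unfolding \<alpha> standard_base_pair by simp
qed

lemma essential_S_structure_pair:
  "essential_S_structure (UNIV :: ('a::field \<times> 'a) set) pplus ptimes (0, 0) (1, 0)"
proof -
  have "ptimes (1, 0) x = x" for x :: "'a \<times> 'a"
    by (cases x) simp
  then have "S_alpha UNIV ptimes (0, 0) (0, 0)
      = {ptimes (1, 0) x | x. x \<in> S_alpha UNIV ptimes (0, 0) (0 :: 'a, 0 :: 'a)}"
    by simp
  then show ?thesis
    unfolding essential_S_structure_def
    by (simp add: S_structure_pair S_commutative_pair wheel_distributive_pair
        S_associative_pair standard_bases_pair S_alpha_pair_iff)
qed

lemma is_unity_pair: "is_unity (UNIV :: ('a::field \<times> 'a) set) ptimes (0, 0) (1, 0)"
  unfolding is_unity_def S_Lambda_pair by (auto simp: prod_eq_iff)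

lemma scalar_inverses_pair: "scalar_inverses (UNIV :: ('a::field \<times> 'a) set) ptimes (0, 0)"
proof -
  have "\<exists>y\<in>range (\<lambda>x. (x, 0)). ptimes (a, 0) y = (1, 0) \<and> ptimes y (a, 0) = (1, 0)"
    if "a \<noteq> 0" for a :: 'a
    using that by (intro bexI[of _ "(inverse a, 0)"]) auto
  then show ?thesis
    unfolding scalar_inverses_def S_alpha_zero_pair using is_unity_pair by blast
qed

lemma iso2_scalars_pair:
  "iso2 (\<lambda>x. (x, 0)) (UNIV :: 'a::field set) (+) (*)
     (S_alpha UNIV ptimes (0, 0) (0, 0)) pplus ptimes"
  unfolding iso2_def S_alpha_zero_pair bij_betw_def by (simp add: inj_on_def)

theorem theorem3p4p2:
  shows "proper_S_field_extension (UNIV :: ('a::field \<times> 'a) set) pplus ptimes (0, 0) (1, 0)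
           (UNIV :: 'a set) (+) (*)"
  unfolding proper_S_field_extension_def S_field_def S_ring_def
    proper_S_extension_def S_extension_def
  using essential_S_structure_pair is_unity_pair scalar_inverses_pair S_structure_pair
    iso2_scalars_pair
  by blast

end
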